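(* For $n\ge1$, the partial-sum operator $s_n:\mathcal D_1\to\mathcal D_1$, $s_n(f)=\sum_{k=0}^na_kz^k$ for $f=\sum_{k\ge0}a_kz^k$, has operator norm $\|s_n\|\ge\sqrt{n+1}$. In particular, for $f_n(z)=nz^{n+1}-(n+1)z^n$ one has $\mathcal D_1(f_n)=n(n+1)$ and $\|s_n(f_n)\|^2_{\mathcal D_1}=n(n+1)^2$.
   Context: $\mathbb D$ is the open unit disk, $dA$ normalized area measure. $\mathcal D_1$ is the space of holomorphic $f$ on $\mathbb D$ with $\mathcal D_1(f):=\int_{\mathbb D}\frac{1-|z|^2}{|1-z|^2}|f'(z)|^2\,dA(z)<\infty$, normed by $\|f\|^2_{\mathcal D_1}=|f(0)|^2+\mathcal D_1(f)$. *)

theory Defs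
  imports "HOL-Complex_Analysis.Complex_Analysis"
begin

text \<open>Dirichlet-type integral D_1(f) with respect to normalized area measure dA = dx dy / pi
  on the unit disc, as an extended nonnegative real.\<close>
definition D1_integral :: "(complex \<Rightarrow> complex) \<Rightarrow> ennreal" where
  "D1_integral f = (\<integral>\<^sup>+ z \<in> ball 0 1.
      ennreal ((1 - (cmod z)\<^sup>2) / (cmod (1 - z))\<^sup>2 * (cmod (deriv f z))\<^sup>2 / pi) \<partial>lborel)"

definition D1_space :: "(complex \<Rightarrow> complex) set" where
  "D1_space = {f. f holomorphic_on ball 0 1 \<and> D1_integral f < \<infinity>}"

definition D1_norm :: "(complex \<Rightarrow> complex) \<Rightarrow> real" where
  "D1_norm f = sqrt ((cmod (f 0))\<^sup>2 + enn2real (D1_integral f))"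

definition taylor_coeff :: "(complex \<Rightarrow> complex) \<Rightarrow> nat \<Rightarrow> complex" where
  "taylor_coeff f k = (deriv ^^ k) f 0 / of_nat (fact k)"

definition partial_sum_op :: "nat \<Rightarrow> (complex \<Rightarrow> complex) \<Rightarrow> (complex \<Rightarrow> complex)" where
  "partial_sum_op n f = (\<lambda>z. \<Sum>k\<le>n. taylor_coeff f k * z ^ k)"

definition D1_opnorm :: "((complex \<Rightarrow> complex) \<Rightarrow> (complex \<Rightarrow> complex)) \<Rightarrow> ereal" where
  "D1_opnorm T = Sup {ereal (D1_norm (T f) / D1_norm f) | f. f \<in> D1_space \<and> D1_norm f \<noteq> 0}"

end

theory Submission
  imports Defs
begin

(* The partial-sum operator sends f_n(z) = n z^(n+1) - (n+1) z^n to -(n+1) z^n, since the Taylor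
   coefficients of a polynomial are its coefficients. Both Dirichlet integrals are computed in
   polar coordinates. For a monomial c z^k the weight (1 - |z|^2) / |1 - z|^2 is the Poisson
   kernel, whose mean over every circle |z| = r < 1 is 1, so D_1(c z^k) = |c|^2 k. For f_n one has
   f_n'(z) = -n(n+1) z^(n-1) (1 - z), and the factor 1 - z cancels the singular denominator,
   leaving a radial integral equal to n(n+1). Both functions vanish at 0, so the ratio of norms is
   sqrt (n (n+1)^2 / (n (n+1))) = sqrt (n+1), a lower bound for the operator norm. *)

lemma measurable_Complex_pair [measurable]:
  "(\<lambda>p::real \<times> real. Complex (fst p) (snd p)) \<in> borel_measurable borel"
  unfolding Complex_eq by (intro borel_measurable_continuous_onI continuous_intros)

lemma distr_lborel_pair_Complex:
  "distr (lborel \<Otimes>\<^sub>M lborel) borel (\<lambda>p. Complex (fst p) (snd p)) = lborel"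
proof (rule lborel_eqI[symmetric])
  have meas: "(\<lambda>p. Complex (fst p) (snd p)) \<in> lborel \<Otimes>\<^sub>M lborel \<rightarrow>\<^sub>M borel"
    unfolding lborel_prod by simp
  fix l u :: complex
  assume le: "\<And>b. b \<in> Basis \<Longrightarrow> l \<bullet> b \<le> u \<bullet> b"
  have "(\<lambda>p. Complex (fst p) (snd p)) -` box l u \<inter> space (lborel \<Otimes>\<^sub>M lborel)
      = box (Re l) (Re u) \<times> box (Im l) (Im u)"
    by (auto simp: box_def Basis_complex_def space_pair_measure)
  then show "emeasure (distr (lborel \<Otimes>\<^sub>M lborel) borel (\<lambda>p. Complex (fst p) (snd p))) (box l u)
      = (\<Prod>b\<in>Basis. (u - l) \<bullet> b)"
    using le[of 1] le[of \<i>]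
    by (simp add: emeasure_distr[OF meas] lborel.emeasure_pair_measure_Times Basis_complex_def
        ennreal_mult')
qed simp

lemma nn_integral_lborel_complex:
  assumes [measurable]: "f \<in> borel_measurable borel"
  shows "(\<integral>\<^sup>+z. f z \<partial>lborel) = (\<integral>\<^sup>+y. \<integral>\<^sup>+x. f (Complex x y) \<partial>lborel \<partial>lborel)"
proof -
  have meas: "(\<lambda>p. Complex (fst p) (snd p)) \<in> lborel \<Otimes>\<^sub>M lborel \<rightarrow>\<^sub>M borel"
    unfolding lborel_prod by simp
  have "(\<integral>\<^sup>+z. f z \<partial>lborel)
      = (\<integral>\<^sup>+z. f z \<partial>distr (lborel \<Otimes>\<^sub>M lborel) borel (\<lambda>p. Complex (fst p) (snd p)))"
    by (simp add: distr_lborel_pair_Complex)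
  also have "\<dots> = (\<integral>\<^sup>+p. f (Complex (fst p) (snd p)) \<partial>(lborel \<Otimes>\<^sub>M lborel))"
    by (rule nn_integral_distr[OF meas]) simp
  also have "\<dots> = (\<integral>\<^sup>+y. \<integral>\<^sup>+x. f (Complex x y) \<partial>lborel \<partial>lborel)"
    by (subst lborel_pair.nn_integral_snd[symmetric]) (auto intro: measurable_compose[OF meas])
  finally show ?thesis .
qed

lemma nn_integral_lborel_Ioo_Icc:
  "(\<integral>\<^sup>+x\<in>{a<..<b}. f x \<partial>lborel) = (\<integral>\<^sup>+x\<in>{a..b::real}. f x \<partial>lborel)"
proof (rule nn_integral_cong_AE)
  have "AE x in lborel. x \<noteq> a" "AE x in lborel. x \<noteq> b"
    by (rule AE_lborel_singleton)+
  then show "AE x in lborel. f x * indicator {a<..<b} x = f x * indicator {a..b} x"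
    by eventually_elim (auto simp: indicator_def)
qed

lemma one_lt_mult_cot:
  fixes y t :: real
  assumes "0 < y" "0 < t" "t < arctan y"
  shows "1 < y * cos t / sin t"
proof -
  have "arctan y < pi / 2"
    using arctan_ubound by simp
  then have "tan t < y"
    using assms tan_monotone[of t "arctan y"] by (simp add: tan_arctan)
  moreover have "0 < tan t"
    using assms \<open>arctan y < pi / 2\<close> by (intro tan_gt_zero) auto
  ultimately have "y * (1 / y) < y * (1 / tan t)"
    using assms(1) by (intro mult_strict_left_mono frac_less2) auto
  then show ?thesis
    using assms(1) by (simp add: tan_def)
qed

lemma abs_mult_cot_gt_one:
  fixes y t :: real
  assumes "0 < y" "0 < t" "t < pi" "t \<notin> {arctan y..pi - arctan y}"
  shows "1 < \<bar>y * cos t / sin t\<bar>"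
proof (cases "t < arctan y")
  case True
  then have "1 < y * cos t / sin t"
    using assms by (intro one_lt_mult_cot) auto
  then show ?thesis
    using abs_ge_self[of "y * cos t / sin t"] by linarith
next
  case False
  then have "1 < y * cos (pi - t) / sin (pi - t)"
    using assms by (intro one_lt_mult_cot) auto
  moreover have "y * cos (pi - t) / sin (pi - t) = - (y * cos t / sin t)"
    by simp
  ultimately show ?thesis
    using abs_ge_minus_self[of "y * cos t / sin t"] by linarith
qed

lemma mult_cot_arctan:
  fixes y :: real
  assumes "y \<noteq> 0"
  shows "y * cos (arctan y) / sin (arctan y) = 1"
  using assms tan_arctan[of y] cos_arctan_not_zero[of y] by (auto simp: tan_def field_simps)

lemma has_real_derivative_neg_mult_cot:
  fixes y t :: real
  assumes "sin t \<noteq> 0"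
  shows "((\<lambda>t. - y * cos t / sin t) has_real_derivative y / (sin t)\<^sup>2) (at t)"
proof -
  have "((\<lambda>t. - y * cos t / sin t) has_real_derivative
      ((- y * - sin t) * sin t - (- y * cos t) * cos t) / (sin t * sin t)) (at t)"
    using assms by (intro DERIV_divide DERIV_cmult DERIV_cos DERIV_sin)
  moreover have "((- y * - sin t) * sin t - (- y * cos t) * cos t) / (sin t * sin t) = y / (sin t)\<^sup>2"
    by (simp add: power2_eq_square algebra_simps flip: distrib_left)
  ultimately show ?thesis
    by simp
qed

lemma nn_integral_substitution_neg_cot:
  fixes F :: "real \<Rightarrow> ennreal" and y :: real
  assumes Fm [measurable]: "F \<in> borel_measurable borel"
    and supp: "\<And>x. 1 \<le> \<bar>x\<bar> \<Longrightarrow> F x = 0" and y: "0 < y"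
  shows "(\<integral>\<^sup>+x. F x \<partial>lborel)
    = (\<integral>\<^sup>+t\<in>{0<..<pi}. F (- y * cos t / sin t) * ennreal (y / (sin t)\<^sup>2) \<partial>lborel)"
proof -
  define a where "a = arctan y"
  define g where "g t = - y * cos t / sin t" for t
  define g' where "g' t = y / (sin t)\<^sup>2" for t
  have a: "0 < a" "a < pi / 2"
    using y arctan_ubound[of y] by (auto simp: a_def zero_less_arctan_iff)
  have sin_pos: "0 < sin t" if "t \<in> {a..pi - a}" for t
    using that a by (intro sin_gt_zero) auto
  have "g a = -1" "g (pi - a) = 1"
    using mult_cot_arctan[of y] y by (simp_all add: g_def a_def)
  have "(\<integral>\<^sup>+x. F x \<partial>lborel) = (\<integral>\<^sup>+x\<in>{g a..g (pi - a)}. F x \<partial>lborel)"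
    using \<open>g a = -1\<close> \<open>g (pi - a) = 1\<close>
    by (intro nn_integral_cong) (auto simp: indicator_def abs_le_iff intro!: supp)
  also have "\<dots> = (\<integral>\<^sup>+t\<in>{a..pi - a}. F (g t) * g' t \<partial>lborel)"
  proof (rule nn_integral_substitution_aux[OF Fm])
    show "(g has_real_derivative g' t) (at t)" if "t \<in> {a..pi - a}" for t
      using sin_pos[OF that] unfolding g_def[abs_def] g'_def by (intro has_real_derivative_neg_mult_cot) simp
    show "continuous_on {a..pi - a} g'"
      unfolding g'_def using sin_pos by (intro continuous_intros) force+
  qed (use a y in \<open>auto simp: g'_def\<close>)
  also have "\<dots> = (\<integral>\<^sup>+t\<in>{0<..<pi}. F (g t) * g' t \<partial>lborel)"
  proof (intro nn_integral_cong)
    fix t :: real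
    have "F (g t) = 0" if "0 < t" "t < pi" "t \<notin> {a..pi - a}"
      using abs_mult_cot_gt_one[OF y that[unfolded a_def]] by (intro supp) (simp add: g_def)
    then show "F (g t) * g' t * indicator {a..pi - a} t = F (g t) * g' t * indicator {0<..<pi} t"
      using a by (auto simp: indicator_def)
  qed
  finally show ?thesis
    by (simp add: g_def g'_def)
qed

lemma nn_integral_Ioi_rescale:
  fixes G :: "real \<Rightarrow> ennreal"
  assumes s: "0 < s" and [measurable]: "G \<in> borel_measurable borel"
  shows "(\<integral>\<^sup>+y\<in>{0<..}. G (y / s) * ennreal (y / s\<^sup>2) \<partial>lborel) = (\<integral>\<^sup>+r\<in>{0<..}. G r * ennreal r \<partial>lborel)"
proof -
  have "indicator {0<..} (s * r) = (indicator {0<..} r :: ennreal)" for r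
    using s by (simp add: indicator_def zero_less_mult_iff)
  then have "(\<integral>\<^sup>+y\<in>{0<..}. G (y / s) * ennreal (y / s\<^sup>2) \<partial>lborel)
      = ennreal s * (\<integral>\<^sup>+r. G r * ennreal (r / s) * indicator {0<..} r \<partial>lborel)"
    using s by (subst nn_integral_real_affine[where c = s and t = 0]) (auto simp: power2_eq_square)
  also have "\<dots> = (\<integral>\<^sup>+r\<in>{0<..}. G r * ennreal r \<partial>lborel)"
  proof -
    have "ennreal s * ennreal (r / s) = ennreal r" for r
      using s by (simp flip: ennreal_mult')
    then have "ennreal s * (G r * ennreal (r / s)) = G r * ennreal r" for r
      by (metis mult.left_commute)
    then show ?thesis
      by (subst nn_integral_cmult[symmetric]) (auto simp: indicator_def intro!: nn_integral_cong)
  qed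
  finally show ?thesis .
qed

lemma borel_measurable_case_prod_compose:
  fixes F :: "real \<Rightarrow> real \<Rightarrow> ennreal"
  assumes "case_prod F \<in> borel_measurable borel"
    and "a \<in> borel_measurable M" "b \<in> borel_measurable M"
  shows "(\<lambda>p. F (a p) (b p)) \<in> borel_measurable M"
proof -
  have "(\<lambda>p. (a p, b p)) \<in> M \<rightarrow>\<^sub>M borel"
    using measurable_Pair[OF assms(2,3)] by (simp add: borel_prod)
  from measurable_compose[OF this assms(1)] show ?thesis
    by simp
qed

lemma borel_measurable_real_pair_fst_snd [measurable]:
  "fst \<in> borel_measurable (borel :: (real \<times> real) measure)"
  "snd \<in> borel_measurable (borel :: (real \<times> real) measure)"
  by (intro borel_measurable_continuous_onI continuous_intros)+

text \<open>Polar coordinates in two substitutions: \<open>x = -y cot t\<close> for each fixed height \<open>y > 0\<close>,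
  then, after Fubini, \<open>y = r sin t\<close> for each fixed angle \<open>t\<close>.\<close>
lemma nn_integral_upper_half_plane_polar:
  fixes F :: "real \<Rightarrow> real \<Rightarrow> ennreal"
  assumes Fm [measurable]: "case_prod F \<in> borel_measurable borel"
    and supp: "\<And>x y. 1 \<le> \<bar>x\<bar> \<Longrightarrow> F x y = 0"
  shows "(\<integral>\<^sup>+y\<in>{0<..}. (\<integral>\<^sup>+x. F x y \<partial>lborel) \<partial>lborel)
    = (\<integral>\<^sup>+t\<in>{0<..<pi}. (\<integral>\<^sup>+r\<in>{0<..}. F (- r * cos t) (r * sin t) * ennreal r \<partial>lborel) \<partial>lborel)"
proof -
  define H where "H t y = F (- y * cos t / sin t) y * ennreal (y / (sin t)\<^sup>2)
    * indicator {0<..<pi} t * indicator {0<..} y" for t y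
  have [measurable]: "(\<lambda>x. F (- snd x * cos (fst x) / sin (fst x)) (snd x)) \<in> borel_measurable borel"
    by (rule borel_measurable_case_prod_compose[OF Fm]) measurable
  then have H_meas: "case_prod H \<in> borel_measurable (lborel \<Otimes>\<^sub>M lborel)"
    unfolding H_def lborel_prod measurable_lborel1 by measurable
  have [measurable]: "(\<lambda>y. F (- y * cos t / sin t) y) \<in> borel_measurable borel" for t
    by (rule borel_measurable_case_prod_compose[OF Fm]) measurable
  have [measurable]: "(\<lambda>r. F (- r * cos t) (r * sin t)) \<in> borel_measurable borel" for t
    by (rule borel_measurable_case_prod_compose[OF Fm]) measurable
  have "(\<integral>\<^sup>+y\<in>{0<..}. (\<integral>\<^sup>+x. F x y \<partial>lborel) \<partial>lborel) = (\<integral>\<^sup>+y. \<integral>\<^sup>+t. H t y \<partial>lborel \<partial>lborel)"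
  proof (intro nn_integral_cong)
    fix y :: real
    show "(\<integral>\<^sup>+x. F x y \<partial>lborel) * indicator {0<..} y = (\<integral>\<^sup>+t. H t y \<partial>lborel)"
      by (cases "0 < y")
        (simp_all add: H_def nn_integral_substitution_neg_cot[of "\<lambda>x. F x y"] supp
          borel_measurable_case_prod_compose[OF Fm])
  qed
  also have "\<dots> = (\<integral>\<^sup>+t. \<integral>\<^sup>+y. H t y \<partial>lborel \<partial>lborel)"
    by (rule lborel_pair.Fubini'[OF H_meas])
  also have "\<dots> = (\<integral>\<^sup>+t\<in>{0<..<pi}. (\<integral>\<^sup>+r\<in>{0<..}. F (- r * cos t) (r * sin t) * ennreal r \<partial>lborel) \<partial>lborel)"
  proof (intro nn_integral_cong)
    fix t :: real
    show "(\<integral>\<^sup>+y. H t y \<partial>lborel)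
      = (\<integral>\<^sup>+r\<in>{0<..}. F (- r * cos t) (r * sin t) * ennreal r \<partial>lborel) * indicator {0<..<pi} t"
    proof (cases "t \<in> {0<..<pi}")
      case True
      define G where "G r = F (- r * cos t) (r * sin t)" for r
      have "0 < sin t"
        using True by (auto intro: sin_gt_zero)
      have [measurable]: "G \<in> borel_measurable borel"
        unfolding G_def by measurable
      have "F (- (y * cos t / sin t)) y = G (y / sin t)" "F (- (y * cos t)) (y * sin t) = G y" for y
        using \<open>0 < sin t\<close> by (simp_all add: G_def)
      then show ?thesis
        using True nn_integral_Ioi_rescale[OF \<open>0 < sin t\<close>, of G] by (simp add: H_def)
    qed (simp add: H_def)
  qed
  finally show ?thesis .
qed

lemma nn_integral_lborel_even:
  fixes Q :: "real \<Rightarrow> ennreal"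
  assumes [measurable]: "Q \<in> borel_measurable borel" and even: "\<And>y. Q (- y) = Q y"
  shows "(\<integral>\<^sup>+y. Q y \<partial>lborel) = 2 * (\<integral>\<^sup>+y\<in>{0<..}. Q y \<partial>lborel)"
proof -
  have "(\<integral>\<^sup>+y. Q y \<partial>lborel) = (\<integral>\<^sup>+y. Q y * indicator {0<..} y + Q y * indicator {..<0} y \<partial>lborel)"
    by (intro nn_integral_cong_AE, use AE_lborel_singleton[of 0] in eventually_elim)
      (auto simp: indicator_def)
  also have "\<dots> = (\<integral>\<^sup>+y\<in>{0<..}. Q y \<partial>lborel) + (\<integral>\<^sup>+y\<in>{..<0}. Q y \<partial>lborel)"
    by (rule nn_integral_add) auto
  also have "(\<integral>\<^sup>+y\<in>{..<0}. Q y \<partial>lborel)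
      = ennreal \<bar>-1\<bar> * (\<integral>\<^sup>+y. Q (0 + -1 * y) * indicator {..<0} (0 + -1 * y) \<partial>lborel)"
    by (rule nn_integral_real_affine) auto
  also have "\<dots> = (\<integral>\<^sup>+y\<in>{0<..}. Q y \<partial>lborel)"
    by (simp add: even indicator_def)
  finally show ?thesis
    by (simp add: mult_2)
qed

lemma cmod_Complex_polar: "cmod (Complex (- r * cos t) (r * sin t)) = \<bar>r\<bar>"
proof -
  have "(- r * cos t)\<^sup>2 + (r * sin t)\<^sup>2 = r\<^sup>2 * ((sin t)\<^sup>2 + (cos t)\<^sup>2)"
    by algebra
  also have "\<dots> = r\<^sup>2"
    by (simp only: sin_cos_squared_add mult_1_right)
  finally show ?thesis
    by (simp only: complex_norm real_sqrt_abs)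
qed

lemma cmod_one_minus_Complex_polar_sq:
  "(cmod (1 - Complex (- r * cos t) (r * sin t)))\<^sup>2 = 1 + 2 * r * cos t + r\<^sup>2"
proof -
  have "(cmod (1 - Complex (- r * cos t) (r * sin t)))\<^sup>2 = (1 + r * cos t)\<^sup>2 + (r * sin t)\<^sup>2"
    by (simp add: cmod_power2)
  also have "\<dots> = 1 + 2 * r * cos t + r\<^sup>2 * ((sin t)\<^sup>2 + (cos t)\<^sup>2)"
    by algebra
  also have "\<dots> = 1 + 2 * r * cos t + r\<^sup>2"
    by (simp only: sin_cos_squared_add mult_1_right)
  finally show ?thesis .
qed

lemma pred_in_ball [measurable]:
  "Measurable.pred borel (\<lambda>z::'a::metric_space. z \<in> ball c r)"
  by (simp add: pred_def borel_open del: mem_ball)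

lemma nn_integral_ball_polar:
  fixes \<Phi> :: "complex \<Rightarrow> ennreal"
  assumes [measurable]: "\<Phi> \<in> borel_measurable borel" and cnj: "\<And>z. \<Phi> (cnj z) = \<Phi> z"
  shows "(\<integral>\<^sup>+z\<in>ball 0 1. \<Phi> z \<partial>lborel) = 2 *
    (\<integral>\<^sup>+t\<in>{0<..<pi}. (\<integral>\<^sup>+r\<in>{0<..<1}. \<Phi> (Complex (- r * cos t) (r * sin t)) * ennreal r \<partial>lborel) \<partial>lborel)"
proof -
  define F where "F x y = \<Phi> (Complex x y) * indicator (ball 0 1) (Complex x y)" for x y
  have F_meas [measurable]: "case_prod F \<in> borel_measurable borel"
  proof -
    have "(\<lambda>p. \<Phi> (Complex (fst p) (snd p)) * indicator (ball 0 1) (Complex (fst p) (snd p)))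
        \<in> borel_measurable (borel :: (real \<times> real) measure)"
      by measurable
    then show ?thesis
      by (simp add: F_def case_prod_beta')
  qed
  have F_meas' [measurable]: "(\<lambda>(y, x). F x y) \<in> borel_measurable (lborel \<Otimes>\<^sub>M lborel)"
    using measurable_pair_swap[of "case_prod F" lborel lborel] F_meas
    by (simp add: lborel_prod measurable_lborel1)
  have "(\<integral>\<^sup>+z\<in>ball 0 1. \<Phi> z \<partial>lborel) = (\<integral>\<^sup>+y. (\<integral>\<^sup>+x. F x y \<partial>lborel) \<partial>lborel)"
    by (simp add: nn_integral_lborel_complex F_def)
  also have "\<dots> = 2 * (\<integral>\<^sup>+y\<in>{0<..}. (\<integral>\<^sup>+x. F x y \<partial>lborel) \<partial>lborel)"
  proof (rule nn_integral_lborel_even)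
    show "(\<lambda>y. \<integral>\<^sup>+x. F x y \<partial>lborel) \<in> borel_measurable borel"
      using lborel.borel_measurable_nn_integral[OF F_meas'] by simp
    have "cnj (Complex x y) = Complex x (- y)" for x y
      by (simp add: complex_eq_iff)
    then have "F x (- y) = F x y" for x y
      using cnj[of "Complex x y"] complex_mod_cnj[of "Complex x y"] by (simp add: F_def indicator_def)
    then show "(\<integral>\<^sup>+x. F x (- y) \<partial>lborel) = (\<integral>\<^sup>+x. F x y \<partial>lborel)" for y
      by simp
  qed
  also have "(\<integral>\<^sup>+y\<in>{0<..}. (\<integral>\<^sup>+x. F x y \<partial>lborel) \<partial>lborel)
      = (\<integral>\<^sup>+t\<in>{0<..<pi}. (\<integral>\<^sup>+r\<in>{0<..}. F (- r * cos t) (r * sin t) * ennreal r \<partial>lborel) \<partial>lborel)"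
  proof (rule nn_integral_upper_half_plane_polar[OF F_meas])
    show "F x y = 0" if "1 \<le> \<bar>x\<bar>" for x y
      using that abs_Re_le_cmod[of "Complex x y"] by (simp add: F_def)
  qed
  also have "(\<lambda>t r. F (- r * cos t) (r * sin t) * ennreal r * indicator {0<..} r)
      = (\<lambda>t r. \<Phi> (Complex (- r * cos t) (r * sin t)) * ennreal r * indicator {0<..<1} r)"
    by (intro ext) (use cmod_Complex_polar in \<open>auto simp: F_def indicator_def\<close>)
  finally show ?thesis .
qed

lemma nn_integral_ball_radial:
  fixes \<psi> :: "real \<Rightarrow> ennreal"
  assumes [measurable]: "\<psi> \<in> borel_measurable borel"
  shows "(\<integral>\<^sup>+z\<in>ball 0 1. \<psi> (cmod z) \<partial>lborel)
    = 2 * ennreal pi * (\<integral>\<^sup>+r\<in>{0..1}. \<psi> r * ennreal r \<partial>lborel)"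
proof -
  have "\<psi> (cmod (Complex (- r * cos t) (r * sin t))) * ennreal r * indicator {0<..<1} r
      = \<psi> r * ennreal r * indicator {0<..<1} r" for r t
    unfolding cmod_Complex_polar by (simp add: indicator_def)
  then have "(\<integral>\<^sup>+z\<in>ball 0 1. \<psi> (cmod z) \<partial>lborel)
      = 2 * (\<integral>\<^sup>+t. (\<integral>\<^sup>+r\<in>{0..1}. \<psi> r * ennreal r \<partial>lborel) * indicator {0<..<pi} t \<partial>lborel)"
    by (subst nn_integral_ball_polar) (simp_all add: nn_integral_lborel_Ioo_Icc)
  also have "\<dots> = 2 * ((\<integral>\<^sup>+r\<in>{0..1}. \<psi> r * ennreal r \<partial>lborel) * ennreal pi)"
    by (subst nn_integral_cmult_indicator) auto
  finally show ?thesis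
    by (simp add: ac_simps)
qed

text \<open>Unlike the textbook antiderivative \<open>2 arctan ((1 - r) / (1 + r) tan (t / 2))\<close>, this one is
  smooth on all of \<open>[0, pi]\<close>.\<close>
lemma Poisson_kernel_antiderivative:
  fixes r t :: real
  assumes r: "0 \<le> r" "r < 1"
  shows "((\<lambda>t. t - 2 * arctan (r * sin t / (1 + r * cos t))) has_real_derivative
      (1 - r\<^sup>2) / (1 + 2 * r * cos t + r\<^sup>2)) (at t)"
proof -
  define q where "q = 1 + r * cos t"
  define D where "D = 1 + 2 * r * cos t + r\<^sup>2"
  have "\<bar>r * cos t\<bar> \<le> r"
    using r by (simp add: abs_mult mult_left_le)
  then have q: "0 < q"
    using r by (simp add: q_def)
  have D: "D = q\<^sup>2 + (r * sin t)\<^sup>2"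
  proof -
    have "q\<^sup>2 + (r * sin t)\<^sup>2 = 1 + 2 * r * cos t + r\<^sup>2 * ((sin t)\<^sup>2 + (cos t)\<^sup>2)"
      unfolding q_def by algebra
    then show ?thesis
      by (simp add: D_def)
  qed
  then have "0 < D"
    using q by (simp add: add_pos_nonneg)
  have num: "r * cos t * q + r * sin t * (r * sin t) = r * cos t + r\<^sup>2"
  proof -
    have "r * cos t * q + r * sin t * (r * sin t) = r * cos t + r\<^sup>2 * ((sin t)\<^sup>2 + (cos t)\<^sup>2)"
      unfolding q_def by algebra
    then show ?thesis
      by simp
  qed
  have "((\<lambda>t. t - 2 * arctan (r * sin t / (1 + r * cos t))) has_real_derivative
      1 - 2 * (inverse (1 + (r * sin t / q)\<^sup>2)
        * ((r * cos t * q - r * sin t * (0 + r * - sin t)) / (q * q)))) (at t)"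
    unfolding q_def using q[unfolded q_def]
    by (intro DERIV_diff DERIV_ident DERIV_cmult DERIV_arctan[THEN DERIV_chain2] DERIV_divide
        DERIV_add DERIV_const DERIV_cos DERIV_sin) auto
  also have "1 + (r * sin t / q)\<^sup>2 = D / (q * q)"
    using q by (simp add: D field_simps power2_eq_square)
  also have "r * cos t * q - r * sin t * (0 + r * - sin t) = r * cos t + r\<^sup>2"
    using num by simp
  also have "inverse (D / (q * q)) * ((r * cos t + r\<^sup>2) / (q * q)) = (r * cos t + r\<^sup>2) / D"
    using q \<open>0 < D\<close> by (simp add: field_simps)
  also have "1 - 2 * ((r * cos t + r\<^sup>2) / D) = (1 - r\<^sup>2) / D"
    using \<open>0 < D\<close> by (simp add: D_def field_simps)
  finally show ?thesis
    by (simp only: D_def)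
qed

lemma nn_integral_Poisson_kernel_half_circle:
  fixes r :: real
  assumes r: "0 \<le> r" "r < 1"
  shows "(\<integral>\<^sup>+t\<in>{0<..<pi}. ennreal ((1 - r\<^sup>2) / (1 + 2 * r * cos t + r\<^sup>2)) \<partial>lborel) = ennreal pi"
proof -
  define F where "F t = t - 2 * arctan (r * sin t / (1 + r * cos t))" for t
  have "0 \<le> (1 - r\<^sup>2) / (1 + 2 * r * cos t + r\<^sup>2)" for t
  proof -
    have "- r \<le> r * cos t"
      using mult_left_mono[OF cos_ge_minus_one[of t] r(1)] by simp
    then have "(1 - r)\<^sup>2 \<le> 1 + 2 * r * cos t + r\<^sup>2"
      by (simp add: power2_eq_square algebra_simps)
    then have "0 \<le> 1 + 2 * r * cos t + r\<^sup>2"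
      using zero_le_power2[of "1 - r"] by linarith
    then show ?thesis
      using r by (intro divide_nonneg_nonneg) (auto simp: abs_square_le_1)
  qed
  then have "(\<integral>\<^sup>+t\<in>{0..pi}. ennreal ((1 - r\<^sup>2) / (1 + 2 * r * cos t + r\<^sup>2)) \<partial>lborel) = F pi - F 0"
    using Poisson_kernel_antiderivative[OF r] unfolding F_def[abs_def]
    by (intro nn_integral_FTC_Icc) auto
  then show ?thesis
    by (simp add: nn_integral_lborel_Ioo_Icc F_def)
qed

lemma nn_integral_half_disc_Poisson_kernel:
  fixes \<psi> :: "real \<Rightarrow> ennreal"
  assumes [measurable]: "\<psi> \<in> borel_measurable borel"
  shows "(\<integral>\<^sup>+t\<in>{0<..<pi}. (\<integral>\<^sup>+r\<in>{0<..<1}.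
      ennreal ((1 - r\<^sup>2) / (1 + 2 * r * cos t + r\<^sup>2)) * \<psi> r * ennreal r \<partial>lborel) \<partial>lborel)
    = ennreal pi * (\<integral>\<^sup>+r\<in>{0..1}. \<psi> r * ennreal r \<partial>lborel)"
proof -
  define P where "P r t = ennreal ((1 - r\<^sup>2) / (1 + 2 * r * cos t + r\<^sup>2))" for r t :: real
  define G where "G t r = P r t * \<psi> r * ennreal r * indicator {0<..<1} r * indicator {0<..<pi} t" for t r
  have G_meas: "case_prod G \<in> borel_measurable (lborel \<Otimes>\<^sub>M lborel)"
    unfolding G_def P_def lborel_prod measurable_lborel1 by measurable
  have [measurable]: "(\<lambda>r. P r t) \<in> borel_measurable borel" for t
    unfolding P_def by measurable
  have P_meas: "(\<lambda>t. P r t) \<in> borel_measurable borel" for r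
    unfolding P_def by measurable
  have inner: "(\<integral>\<^sup>+r\<in>{0<..<1}. P r t * \<psi> r * ennreal r \<partial>lborel) * indicator {0<..<pi} t
      = (\<integral>\<^sup>+r. G t r \<partial>lborel)" for t
    unfolding G_def by (rule nn_integral_multc[symmetric]) measurable
  have radial: "(\<integral>\<^sup>+t. G t r \<partial>lborel) = ennreal pi * (\<psi> r * ennreal r * indicator {0<..<1} r)" for r
  proof (cases "r \<in> {0<..<1}")
    case True
    have "(\<integral>\<^sup>+t. G t r \<partial>lborel) = (\<integral>\<^sup>+t. \<psi> r * ennreal r * (P r t * indicator {0<..<pi} t) \<partial>lborel)"
      using True by (simp add: G_def ac_simps)
    also have "\<dots> = \<psi> r * ennreal r * (\<integral>\<^sup>+t\<in>{0<..<pi}. P r t \<partial>lborel)"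
      using P_meas by (intro nn_integral_cmult borel_measurable_times) auto
    also have "(\<integral>\<^sup>+t\<in>{0<..<pi}. P r t \<partial>lborel) = ennreal pi"
      using True by (simp add: P_def nn_integral_Poisson_kernel_half_circle)
    finally show ?thesis
      using True by (simp add: ac_simps)
  qed (simp add: G_def)
  have "(\<integral>\<^sup>+t\<in>{0<..<pi}. (\<integral>\<^sup>+r\<in>{0<..<1}. P r t * \<psi> r * ennreal r \<partial>lborel) \<partial>lborel)
      = (\<integral>\<^sup>+t. \<integral>\<^sup>+r. G t r \<partial>lborel \<partial>lborel)"
    by (simp only: inner)
  also have "\<dots> = (\<integral>\<^sup>+r. \<integral>\<^sup>+t. G t r \<partial>lborel \<partial>lborel)"
    using lborel_pair.Fubini'[OF G_meas] by simp
  also have "\<dots> = (\<integral>\<^sup>+r. ennreal pi * (\<psi> r * ennreal r * indicator {0<..<1} r) \<partial>lborel)"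
    by (simp only: radial)
  also have "\<dots> = ennreal pi * (\<integral>\<^sup>+r\<in>{0..1}. \<psi> r * ennreal r \<partial>lborel)"
    by (subst nn_integral_cmult) (simp_all add: nn_integral_lborel_Ioo_Icc)
  finally show ?thesis
    by (simp only: P_def)
qed

lemma nn_integral_ball_radial_Poisson:
  fixes \<psi> :: "real \<Rightarrow> ennreal"
  assumes [measurable]: "\<psi> \<in> borel_measurable borel"
  shows "(\<integral>\<^sup>+z\<in>ball 0 1. ennreal ((1 - (cmod z)\<^sup>2) / (cmod (1 - z))\<^sup>2) * \<psi> (cmod z) \<partial>lborel)
    = 2 * ennreal pi * (\<integral>\<^sup>+r\<in>{0..1}. \<psi> r * ennreal r \<partial>lborel)"
proof -
  define \<Phi> where "\<Phi> z = ennreal ((1 - (cmod z)\<^sup>2) / (cmod (1 - z))\<^sup>2) * \<psi> (cmod z)" for z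
  have polar: "\<Phi> (Complex (- r * cos t) (r * sin t)) * ennreal r * indicator {0<..<1} r
      = ennreal ((1 - r\<^sup>2) / (1 + 2 * r * cos t + r\<^sup>2)) * \<psi> r * ennreal r * indicator {0<..<1} r" for r t
    unfolding \<Phi>_def cmod_Complex_polar cmod_one_minus_Complex_polar_sq by (simp add: indicator_def)
  have "cmod (1 - cnj z) = cmod (1 - z)" for z
    by (metis complex_cnj_one complex_cnj_diff complex_mod_cnj)
  then have "(\<integral>\<^sup>+z\<in>ball 0 1. \<Phi> z \<partial>lborel) = 2 *
      (\<integral>\<^sup>+t\<in>{0<..<pi}. (\<integral>\<^sup>+r\<in>{0<..<1}. \<Phi> (Complex (- r * cos t) (r * sin t)) * ennreal r \<partial>lborel) \<partial>lborel)"
    by (intro nn_integral_ball_polar) (simp_all add: \<Phi>_def)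
  also have "\<dots> = 2 * (ennreal pi * (\<integral>\<^sup>+r\<in>{0..1}. \<psi> r * ennreal r \<partial>lborel))"
    by (simp only: polar nn_integral_half_disc_Poisson_kernel[OF assms])
  finally show ?thesis
    by (simp add: \<Phi>_def mult.assoc)
qed

lemma ennreal_two_pi_mult: "2 * ennreal pi * ennreal y = ennreal (2 * pi * y)"
  by (simp add: ennreal_mult')

lemma nn_integral_radial_power:
  assumes A: "0 \<le> A"
  shows "(\<integral>\<^sup>+r\<in>{0..1}. ennreal (A * r ^ (2 * m)) * ennreal r \<partial>lborel) = ennreal (A / (2 * real m + 2))"
proof -
  have "(\<integral>\<^sup>+r\<in>{0..1}. ennreal (A * r ^ (2 * m)) * ennreal r \<partial>lborel)
      = (\<integral>\<^sup>+r\<in>{0..1}. ennreal (A * r ^ (2 * m + 1)) \<partial>lborel)"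
  proof (intro nn_integral_cong)
    fix r :: real
    have "A * r ^ (2 * m + 1) = A * r ^ (2 * m) * r"
      by (simp add: power_add)
    then have "ennreal (A * r ^ (2 * m)) * ennreal r = ennreal (A * r ^ (2 * m + 1))" if "0 \<le> r"
      by (simp only: ennreal_mult''[OF that, symmetric])
    then show "ennreal (A * r ^ (2 * m)) * ennreal r * indicator {0..1} r
        = ennreal (A * r ^ (2 * m + 1)) * indicator {0..1} r"
      by (simp add: indicator_def)
  qed
  also have "\<dots> = ennreal (A / (2 * real m + 2))"
  proof (subst nn_integral_FTC_Icc[where F = "\<lambda>r. A * r ^ (2 * m + 2) / (2 * real m + 2)"])
    fix r :: real
    have "DERIV (\<lambda>r. A * r ^ (2 * m + 2) / (2 * real m + 2)) r
        :> A * (real (2 * m + 2) * r ^ (2 * m + 1)) / (2 * real m + 2)"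
      using DERIV_pow[of "2 * m + 2" r] by (intro DERIV_cdivide DERIV_cmult) simp
    moreover have "real (2 * m + 2) = 2 * real m + 2"
      by simp
    ultimately show "DERIV (\<lambda>r. A * r ^ (2 * m + 2) / (2 * real m + 2)) r :> A * r ^ (2 * m + 1)"
      by (simp only:) simp
  qed (simp_all add: A power_0_left)
  finally show ?thesis .
qed

lemma nn_integral_radial_power_weighted:
  assumes B: "0 \<le> B"
  shows "(\<integral>\<^sup>+r\<in>{0..1}. ennreal (B * r ^ (2 * m) * (1 - r\<^sup>2)) * ennreal r \<partial>lborel)
    = ennreal (B * (1 / (2 * real m + 2) - 1 / (2 * real m + 4)))"
proof -
  have "(\<integral>\<^sup>+r\<in>{0..1}. ennreal (B * r ^ (2 * m) * (1 - r\<^sup>2)) * ennreal r \<partial>lborel)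
      = (\<integral>\<^sup>+r\<in>{0..1}. ennreal (B * (r ^ (2 * m + 1) - r ^ (2 * m + 3))) \<partial>lborel)"
  proof (intro nn_integral_cong)
    fix r :: real
    have poly: "B * r ^ (2 * m) * (1 - r\<^sup>2) * r = B * (r ^ (2 * m + 1) - r ^ (2 * m + 3))"
      by (simp add: algebra_simps power2_eq_square power3_eq_cube power_add)
    have "ennreal (B * r ^ (2 * m) * (1 - r\<^sup>2)) * ennreal r
        = ennreal (B * (r ^ (2 * m + 1) - r ^ (2 * m + 3)))" if "0 \<le> r"
      by (simp only: ennreal_mult''[OF that, symmetric] poly)
    then show "ennreal (B * r ^ (2 * m) * (1 - r\<^sup>2)) * ennreal r * indicator {0..1} r
        = ennreal (B * (r ^ (2 * m + 1) - r ^ (2 * m + 3))) * indicator {0..1} r"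
      by (simp add: indicator_def)
  qed
  also have "\<dots> = ennreal (B * (1 / (2 * real m + 2) - 1 / (2 * real m + 4)))"
  proof (subst nn_integral_FTC_Icc[where F = "\<lambda>r. B * (r ^ (2 * m + 2) / (2 * real m + 2) - r ^ (2 * m + 4) / (2 * real m + 4))"])
    show "DERIV (\<lambda>r. B * (r ^ (2 * m + 2) / (2 * real m + 2) - r ^ (2 * m + 4) / (2 * real m + 4))) r
        :> B * (r ^ (2 * m + 1) - r ^ (2 * m + 3))" for r :: real
      by (rule derivative_eq_intros refl | simp)+ (simp add: field_simps)
    show "0 \<le> B * (r ^ (2 * m + 1) - r ^ (2 * m + 3))" if "r \<in> {0..1}" for r :: real
      using that power_decreasing[of "2 * m + 1" "2 * m + 3" r] B by simp
  qed (simp_all add: B power_0_left)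
  finally show ?thesis .
qed

lemma inverse_diff_even_consecutive:
  "2 * (1 / (2 * real m + 2) - 1 / (2 * real m + 4)) = 1 / ((real m + 1) * (real m + 2))"
proof -
  have "2 * real m + 2 = 2 * (real m + 1)" "2 * real m + 4 = 2 * (real m + 2)"
    by simp_all
  then have "2 * (1 / (2 * real m + 2) - 1 / (2 * real m + 4)) = 1 / (real m + 1) - 1 / (real m + 2)"
    by (simp only:) (simp add: right_diff_distrib del: distrib_left_numeral)
  also have "\<dots> = 1 / ((real m + 1) * (real m + 2))"
  proof -
    have "real m + 1 \<noteq> 0" "real m + 2 \<noteq> 0"
      using of_nat_0_le_iff[of m] by linarith+
    then show ?thesis
      by (simp add: field_simps)
  qed
  finally show ?thesis .
qed

lemma D1_integral_monomial: "D1_integral (\<lambda>z. c * z ^ k) = ennreal ((cmod c)\<^sup>2 * real k)"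
proof (cases k)
  case 0
  then show ?thesis
    by (simp add: D1_integral_def)
next
  case (Suc m)
  define A where "A = (cmod c * real k)\<^sup>2 / pi"
  have "((\<lambda>z. c * z ^ k) has_field_derivative c * (of_nat k * (1 * z ^ (k - Suc 0)))) (at z)" for z
    by (intro DERIV_cmult DERIV_power DERIV_ident)
  then have deriv_eq: "deriv (\<lambda>z. c * z ^ k) z = c * of_nat k * z ^ m" for z
    using Suc by (simp add: DERIV_imp_deriv mult.assoc)
  have "ennreal ((1 - (cmod z)\<^sup>2) / (cmod (1 - z))\<^sup>2 * (cmod (deriv (\<lambda>z. c * z ^ k) z))\<^sup>2 / pi)
      = ennreal ((1 - (cmod z)\<^sup>2) / (cmod (1 - z))\<^sup>2) * ennreal (A * r ^ (2 * m))"
    if "z \<in> ball 0 1" "r = cmod z" for z r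
  proof -
    have "0 \<le> (1 - (cmod z)\<^sup>2) / (cmod (1 - z))\<^sup>2"
      using that by (simp add: abs_square_le_1)
    moreover have "(cmod (deriv (\<lambda>z. c * z ^ k) z))\<^sup>2 / pi = A * r ^ (2 * m)"
      using that by (simp add: deriv_eq A_def norm_mult norm_power power_mult_distrib power_even_eq)
    ultimately show ?thesis
      by (simp only: times_divide_eq_right[symmetric] ennreal_mult')
  qed
  then have "D1_integral (\<lambda>z. c * z ^ k) = (\<integral>\<^sup>+z\<in>ball 0 1.
      ennreal ((1 - (cmod z)\<^sup>2) / (cmod (1 - z))\<^sup>2) * ennreal (A * cmod z ^ (2 * m)) \<partial>lborel)"
    unfolding D1_integral_def by (intro nn_integral_cong) (simp add: indicator_def)
  also have "\<dots> = 2 * ennreal pi * (\<integral>\<^sup>+r\<in>{0..1}. ennreal (A * r ^ (2 * m)) * ennreal r \<partial>lborel)"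
    by (rule nn_integral_ball_radial_Poisson) measurable
  also have "\<dots> = 2 * ennreal pi * ennreal (A / (2 * real m + 2))"
    using nn_integral_radial_power[of A m] by (simp add: A_def)
  also have "\<dots> = ennreal ((cmod c)\<^sup>2 * real k)"
  proof -
    have "2 * real m + 2 = 2 * real k" "real k \<noteq> 0"
      by (simp_all add: Suc)
    then show ?thesis
      unfolding ennreal_two_pi_mult A_def by (simp add: power2_eq_square)
  qed
  finally show ?thesis .
qed

text \<open>The factor \<open>1 - z\<close> of \<open>f'\<close> cancels the singularity of the weight at \<open>z = 1\<close>.\<close>
lemma D1_integral_eq_of_deriv:
  assumes deriv_f: "\<And>z. deriv f z = c * z ^ m * (1 - z)"
  shows "D1_integral f = ennreal ((cmod c)\<^sup>2 / ((real m + 1) * (real m + 2)))"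
proof -
  define B where "B = (cmod c)\<^sup>2 / pi"
  have "ennreal ((1 - (cmod z)\<^sup>2) / (cmod (1 - z))\<^sup>2 * (cmod (deriv f z))\<^sup>2 / pi)
      = ennreal (B * r ^ (2 * m) * (1 - r\<^sup>2))"
    if "z \<in> ball 0 1" "r = cmod z" for z r
  proof -
    have "cmod (1 - z) \<noteq> 0"
      using that by auto
    moreover have "(cmod (deriv f z))\<^sup>2 = (cmod c)\<^sup>2 * r ^ (2 * m) * (cmod (1 - z))\<^sup>2"
      using that by (simp add: deriv_f norm_mult norm_power power_mult_distrib power_even_eq)
    ultimately have "(1 - (cmod z)\<^sup>2) / (cmod (1 - z))\<^sup>2 * (cmod (deriv f z))\<^sup>2 / pi
        = B * r ^ (2 * m) * (1 - r\<^sup>2)"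
      using that by (simp add: B_def field_simps)
    then show ?thesis
      by simp
  qed
  then have "D1_integral f = (\<integral>\<^sup>+z\<in>ball 0 1. ennreal (B * cmod z ^ (2 * m) * (1 - (cmod z)\<^sup>2)) \<partial>lborel)"
    unfolding D1_integral_def by (intro nn_integral_cong) (simp add: indicator_def)
  also have "\<dots> = 2 * ennreal pi * (\<integral>\<^sup>+r\<in>{0..1}. ennreal (B * r ^ (2 * m) * (1 - r\<^sup>2)) * ennreal r \<partial>lborel)"
    by (rule nn_integral_ball_radial) measurable
  also have "\<dots> = 2 * ennreal pi * ennreal (B * (1 / (2 * real m + 2) - 1 / (2 * real m + 4)))"
    using nn_integral_radial_power_weighted[of B m] by (simp add: B_def)
  also have "\<dots> = ennreal (2 * pi * (B * (1 / (2 * real m + 2) - 1 / (2 * real m + 4))))"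
    by (rule ennreal_two_pi_mult)
  also have "2 * pi * (B * (1 / (2 * real m + 2) - 1 / (2 * real m + 4)))
      = (cmod c)\<^sup>2 * (2 * (1 / (2 * real m + 2) - 1 / (2 * real m + 4)))"
    by (simp add: B_def)
  also have "2 * (1 / (2 * real m + 2) - 1 / (2 * real m + 4)) = 1 / ((real m + 1) * (real m + 2))"
    by (rule inverse_diff_even_consecutive)
  finally show ?thesis
    by simp
qed

lemma D1_opnorm_ge:
  assumes "f \<in> D1_space" "D1_norm f \<noteq> 0"
  shows "ereal (D1_norm (T f) / D1_norm f) \<le> D1_opnorm T"
  unfolding D1_opnorm_def using assms by (intro Sup_upper) blast

lemma taylor_coeff_monomial: "taylor_coeff (\<lambda>z. c * z ^ p) k = (if k = p then c else 0)"
proof -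
  have "(deriv ^^ k) (\<lambda>z. c * z ^ p) 0 = c * (deriv ^^ k) (\<lambda>z. z ^ p) 0"
    by (rule higher_deriv_cmult[where A = UNIV]) (auto intro: holomorphic_intros)
  also have "(deriv ^^ k) (\<lambda>z. z ^ p) 0 = pochhammer (of_nat (Suc p - k)) k * 0 ^ (p - k)"
    using higher_deriv_power[of k 0 p 0] by simp
  finally have "taylor_coeff (\<lambda>z. c * z ^ p) k
      = c * pochhammer (of_nat (Suc p - k)) k * 0 ^ (p - k) / fact k"
    by (simp add: taylor_coeff_def mult.assoc)
  then show ?thesis
    by (cases k p rule: linorder_cases) (simp_all add: pochhammer_0_left flip: pochhammer_fact)
qed

lemma taylor_coeff_diff:
  assumes "f holomorphic_on S" "g holomorphic_on S" "open S" "0 \<in> S"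
  shows "taylor_coeff (\<lambda>z. f z - g z) k = taylor_coeff f k - taylor_coeff g k"
  using higher_deriv_diff[OF assms] by (simp add: taylor_coeff_def diff_divide_distrib)

lemma partial_sum_op_diff:
  assumes "f holomorphic_on S" "g holomorphic_on S" "open S" "0 \<in> S"
  shows "partial_sum_op n (\<lambda>z. f z - g z) = (\<lambda>z. partial_sum_op n f z - partial_sum_op n g z)"
  by (simp add: partial_sum_op_def taylor_coeff_diff[OF assms] left_diff_distrib sum_subtractf)

lemma partial_sum_op_monomial:
  "partial_sum_op n (\<lambda>z. c * z ^ p) = (\<lambda>z. if p \<le> n then c * z ^ p else 0)"
proof
  fix z :: complex
  have "partial_sum_op n (\<lambda>z. c * z ^ p) z = (\<Sum>k\<le>n. if k = p then c * z ^ k else 0)"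
    unfolding partial_sum_op_def taylor_coeff_monomial by (intro sum.cong) auto
  then show "partial_sum_op n (\<lambda>z. c * z ^ p) z = (if p \<le> n then c * z ^ p else 0)"
    by (simp add: sum.delta)
qed

lemma partial_sum_op_drop_top_term:
  "partial_sum_op n (\<lambda>z. a * z ^ (n + 1) - b * z ^ n) = (\<lambda>z. - b * z ^ n)"
proof -
  have "partial_sum_op n (\<lambda>z. a * z ^ (n + 1) - b * z ^ n)
      = (\<lambda>z. partial_sum_op n (\<lambda>z. a * z ^ (n + 1)) z - partial_sum_op n (\<lambda>z. b * z ^ n) z)"
    by (rule partial_sum_op_diff[where S = UNIV]) (auto intro!: holomorphic_intros)
  also have "\<dots> = (\<lambda>z. - b * z ^ n)"
    by (simp only: partial_sum_op_monomial) simp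
  finally show ?thesis .
qed

lemma D1_integral_extremal:
  assumes n: "n = Suc m"
  shows "D1_integral (\<lambda>z. of_nat n * z ^ (n + 1) - of_nat (n + 1) * z ^ n)
    = ennreal (real n * (real n + 1))"
proof -
  define f where "f z = of_nat n * z ^ (n + 1) - of_nat (n + 1) * z ^ n" for z :: complex
  have "(f has_field_derivative (- (of_nat n * of_nat (n + 1))) * z ^ m * (1 - z)) (at z)" for z
  proof -
    have "(f has_field_derivative of_nat n * (of_nat (n + 1) * (1 * z ^ (n + 1 - Suc 0)))
        - of_nat (n + 1) * (of_nat n * (1 * z ^ (n - Suc 0)))) (at z)"
      unfolding f_def[abs_def] by (intro DERIV_diff DERIV_cmult DERIV_power DERIV_ident)
    moreover have "of_nat n * (of_nat (n + 1) * (1 * z ^ (n + 1 - Suc 0)))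
        - of_nat (n + 1) * (of_nat n * (1 * z ^ (n - Suc 0)))
        = (- (of_nat n * of_nat (n + 1))) * z ^ m * (1 - z)"
      by (simp add: n algebra_simps)
    ultimately show ?thesis
      by simp
  qed
  then have "deriv f z = (- (of_nat n * of_nat (n + 1))) * z ^ m * (1 - z)" for z
    by (rule DERIV_imp_deriv)
  moreover have "cmod (- (of_nat n * of_nat (n + 1)) :: complex) = real n * (real n + 1)"
    by (simp only: norm_minus_cancel norm_mult norm_of_nat) simp
  moreover have "(real n * (real n + 1))\<^sup>2 / ((real m + 1) * (real m + 2)) = real n * (real n + 1)"
  proof -
    have "real m + 1 = real n" "real m + 2 = real n + 1" "real n \<noteq> 0"
      using n by simp_all
    then show ?thesis
      by (simp only:) (simp add: power2_eq_square)
  qed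
  ultimately have "D1_integral f = ennreal (real n * (real n + 1))"
    using D1_integral_eq_of_deriv[of f] by metis
  then show ?thesis
    by (simp add: f_def[abs_def])
qed

lemma D1_norm_eq:
  assumes "D1_integral f = ennreal a" "0 \<le> a"
  shows "D1_norm f = sqrt ((cmod (f 0))\<^sup>2 + a)"
  using assms by (simp add: D1_norm_def)

theorem mainTheorem12:
  fixes n :: nat
  assumes "n \<ge> 1"
  defines "fn \<equiv> (\<lambda>z::complex. of_nat n * z ^ (n + 1) - of_nat (n + 1) * z ^ n)"
  shows "ereal (sqrt (real n + 1)) \<le> D1_opnorm (partial_sum_op n)
    \<and> D1_integral fn = ennreal (real n * (real n + 1))
    \<and> (D1_norm (partial_sum_op n fn))\<^sup>2 = real n * (real n + 1)\<^sup>2"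
proof -
  obtain m where n: "n = Suc m"
    using assms(1) by (cases n) auto
  have ps: "partial_sum_op n fn = (\<lambda>z. - of_nat (n + 1) * z ^ n)"
    unfolding fn_def by (rule partial_sum_op_drop_top_term)
  have D1_fn: "D1_integral fn = ennreal (real n * (real n + 1))"
    unfolding fn_def using n by (rule D1_integral_extremal)
  have "cmod (- of_nat (n + 1) :: complex) = real n + 1"
    by (simp only: norm_minus_cancel norm_of_nat)
  then have D1_ps: "D1_integral (partial_sum_op n fn) = ennreal (real n * (real n + 1)\<^sup>2)"
    unfolding ps D1_integral_monomial by (simp add: ac_simps)
  have norm_fn: "D1_norm fn = sqrt (real n * (real n + 1))"
    using D1_norm_eq[OF D1_fn] n by (simp add: fn_def)
  have "partial_sum_op n fn 0 = 0"
    unfolding ps using n by simp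
  then have norm_ps: "D1_norm (partial_sum_op n fn) = sqrt (real n * (real n + 1)\<^sup>2)"
    using D1_norm_eq[OF D1_ps] by simp
  have "fn \<in> D1_space"
    unfolding D1_space_def using D1_fn by (auto simp: fn_def intro!: holomorphic_intros)
  moreover have "D1_norm fn \<noteq> 0"
    using n by (simp add: norm_fn)
  moreover have "D1_norm (partial_sum_op n fn) / D1_norm fn = sqrt (real n + 1)"
    unfolding norm_fn norm_ps real_sqrt_divide[symmetric] using n by (simp add: power2_eq_square)
  ultimately have "ereal (sqrt (real n + 1)) \<le> D1_opnorm (partial_sum_op n)"
    using D1_opnorm_ge[of fn "partial_sum_op n"] by simp
  then show ?thesis
    using D1_fn norm_ps by simp
qed

end
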